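(* Let $n$ be odd and squarefree, with $\Omega(n)\geq 3$ and every prime divisor of $n$ at least $7$. Then a sequence in $\mathbb{Z}_n$ is an $S(n)$-extremal sequence for the Davenport constant if and only if it is a $U(n)$-extremal sequence for the Davenport constant.
   Context: $\mathbb{Z}_n$ is the integers mod $n$, $U(n)$ its unit group. For nonempty $A\subseteq\mathbb{Z}_n\setminus\{0\}$, a sequence $(x_1,\ldots,x_k)$ is an $A$-weighted zero-sum sequence if $\sum a_ix_i=0$ for some $a_i\in A$; $D_A(n)$ is the least $k$ such that every length-$k$ sequence in $\mathbb{Z}_n$ has a nonempty $A$-weighted zero-sum subsequence; an $A$-extremal sequence for the Davenport constant is a sequence of length $D_A(n)-1$ with no $A$-weighted zero-sum subsequence. $\Omega(n)$ is the number of prime factors with multiplicity. For odd $n=\prod p_i^{r_i}$ and $a\in U(n)$, $\left(\frac{a}{n}\right)=\prod\left(\frac{a}{p_i}\right)^{r_i}$ (Legendre symbols of images mod $p_i$), and $S(n)$ is the kernel of $a\mapsto\left(\frac{a}{n}\right)$ on $U(n)$. *)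

theory Defs
  imports "HOL-Number_Theory.Number_Theory" "HOL-Computational_Algebra.Squarefree"
begin

text \<open>Elements of Z_n are represented by naturals in {0..<n}; a sequence in Z_n is a
list xs with set xs contained in {..<n}.\<close>

definition Zn_seq :: "nat \<Rightarrow> nat list \<Rightarrow> bool" where
  "Zn_seq n xs \<longleftrightarrow> set xs \<subseteq> {..<n}"

definition has_wzs_subseq :: "nat \<Rightarrow> nat set \<Rightarrow> nat list \<Rightarrow> bool" where
  "has_wzs_subseq n A xs \<longleftrightarrow>
     (\<exists>I w. I \<subseteq> {..<length xs} \<and> I \<noteq> {} \<and> (\<forall>i\<in>I. w i \<in> A) \<and>
            (\<Sum>i\<in>I. w i * xs ! i) mod n = 0)"

definition davenportA :: "nat \<Rightarrow> nat set \<Rightarrow> nat" where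
  "davenportA n A = (LEAST k. \<forall>xs. Zn_seq n xs \<and> length xs = k \<longrightarrow> has_wzs_subseq n A xs)"

definition extremal_seq :: "nat \<Rightarrow> nat set \<Rightarrow> nat list \<Rightarrow> bool" where
  "extremal_seq n A xs \<longleftrightarrow> Zn_seq n xs \<and> length xs = davenportA n A - 1 \<and>
     \<not> has_wzs_subseq n A xs"

definition unitsZ :: "nat \<Rightarrow> nat set" where
  "unitsZ n = {a. 0 < a \<and> a < n \<and> coprime a n}"

definition jacobi :: "nat \<Rightarrow> nat \<Rightarrow> int" where
  "jacobi a n = (\<Prod>p\<in>prime_factors n. Legendre (int a) (int p) ^ multiplicity p n)"

definition Sn :: "nat \<Rightarrow> nat set" where
  "Sn n = {a \<in> unitsZ n. jacobi a n = 1}"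

definition bigOmega :: "nat \<Rightarrow> nat" where
  "bigOmega n = size (prime_factorization n)"

end

theory Submission
  imports Defs
begin

(* Let n be squarefree with k prime factors, and call a nonempty set T of terms of a sequence
   admissible if, for every prime p dividing n, the number of terms in T not divisible by p is
   not 1. A U(n)-weighted zero sum over T forces T to be admissible (modulo p a single surviving
   term cannot vanish); any k + 1 terms contain an admissible set (repeatedly discard the only
   term not divisible by some p); and the sequence of the n/p has none, so D_U(n) = k + 1.
   Conversely, for k >= 3 an admissible T carries an S(n)-weighted zero sum: solve the zero-sum
   condition modulo each p with weights prime to p and glue the weights by the Chinese remainder
   theorem. The Jacobi symbol of a glued weight is the product of its local Legendre symbols,
   and these can be made to multiply to 1. For p >= 7 the symbols of g and g + 1 realise all
   four sign patterns, so three terms not divisible by p admit weights with prescribed symbols;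
   and the weight of a term divisible by p can be changed freely modulo p. *)

section \<open>Legendre symbols\<close>

lemma Legendre_cong:
  assumes "[a = b] (mod p)"
  shows "Legendre a p = Legendre b p"
proof -
  have "[a = 0] (mod p) \<longleftrightarrow> [b = 0] (mod p)" and "[y\<^sup>2 = a] (mod p) \<longleftrightarrow> [y\<^sup>2 = b] (mod p)" for y
    using assms by (meson cong_sym cong_trans)+
  then show ?thesis
    by (simp add: Legendre_def QuadRes_def)
qed

lemma abs_Legendre_eq_1_iff: "\<bar>Legendre a p\<bar> = 1 \<longleftrightarrow> \<not> p dvd a"
  by (simp add: Legendre_def cong_0_iff)

lemma Legendre_one: "1 < p \<Longrightarrow> Legendre 1 p = 1"
  by (auto simp: Legendre_def QuadRes_def cong_0_iff intro: exI[of _ 1])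

lemma Legendre_square:
  assumes "prime p" "\<not> int p dvd a"
  shows "Legendre (a\<^sup>2) (int p) = 1"
  using assms by (auto simp: Legendre_def QuadRes_def cong_0_iff prime_dvd_power_iff intro: exI[of _ a])

lemma Legendre_mult:
  assumes "prime p" "2 < p"
  shows "Legendre (a * b) (int p) = Legendre a (int p) * Legendre b (int p)"
proof -
  have euler: "[Legendre x (int p) = x ^ ((p - 1) div 2)] (mod int p)" for x
    using euler_criterion[OF assms] by simp
  have "[Legendre (a * b) p = a ^ ((p - 1) div 2) * b ^ ((p - 1) div 2)] (mod p)"
    using euler[of "a * b"] by (simp add: power_mult_distrib)
  also have "[a ^ ((p - 1) div 2) * b ^ ((p - 1) div 2) = Legendre a p * Legendre b p] (mod p)"
    using euler[of a] euler[of b] by (intro cong_mult) (auto simp: cong_sym)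
  finally have "[Legendre (a * b) p + 1 = Legendre a p * Legendre b p + 1] (mod p)"
    by (rule cong_add) simp
  moreover have "Legendre (a * b) p + 1 \<in> {0, 1, 2}" "Legendre a p * Legendre b p + 1 \<in> {0, 1, 2}"
    by (auto simp: Legendre_def)
  ultimately have "Legendre (a * b) p + 1 = Legendre a p * Legendre b p + 1"
    using assms(2) by (intro cong_less_imp_eq_int) auto
  then show ?thesis
    by simp
qed

lemma Legendre_mod_inverse:
  assumes "prime p" "2 < p" "[a * b = 1] (mod int p)"
  shows "Legendre b (int p) = Legendre a (int p)"
proof -
  have "Legendre a p * Legendre b p = 1"
    using Legendre_mult[OF assms(1,2)] Legendre_cong[OF assms(3)] Legendre_one[of "int p"] assms(2)
    by simp
  then show ?thesis
    by (auto simp: Legendre_def split: if_splits)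
qed

lemma mod_inverse_exists:
  assumes "prime p" "\<not> int p dvd a"
  obtains b where "[a * b = 1] (mod int p)"
proof -
  have "prime (int p)"
    using assms(1) by simp
  then have "coprime a (int p)"
    using assms(2) prime_imp_coprime coprime_commute by blast
  then show ?thesis
    using cong_solve_coprime_int that by blast
qed

lemma Legendre_nonresidue_exists:
  assumes "prime p" "2 < p"
  obtains v where "Legendre v (int p) = -1"
proof -
  obtain g where g: "residue_primroot p g"
    using prime_primitive_root_exists[of p] assms prime_gt_1_nat by blast
  then have ord: "ord p g = p - 1" and "coprime p g"
    using assms by (auto simp: residue_primroot_def totient_prime)
  then have "\<not> int p dvd int g"
    using assms(1) by (metis coprime_common_divisor dvd_refl int_dvd_int_iff not_prime_unit)
  moreover have "Legendre (int g) (int p) \<noteq> 1"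
  proof
    assume "Legendre (int g) (int p) = 1"
    then have "[int (g ^ ((p - 1) div 2)) = int 1] (mod int p)"
      using euler_criterion[OF assms, of "int g"] by (simp add: cong_sym)
    then have "[g ^ ((p - 1) div 2) = 1] (mod p)"
      by (simp only: cong_int_iff)
    then have "ord p g dvd (p - 1) div 2"
      using ord_divides'[of g "(p - 1) div 2" p] by simp
    then show False
      using ord assms(2) by (auto dest: dvd_imp_le)
  qed
  ultimately show ?thesis
    using that abs_Legendre_eq_1_iff[of "int g" "int p"] by (auto simp: abs_eq_iff')
qed

definition Legendre_rep :: "nat \<Rightarrow> int \<Rightarrow> int" where
  "Legendre_rep p e = (if e = 1 then 1 else (SOME v. Legendre v (int p) = -1))"

lemma Legendre_Legendre_rep:
  assumes "prime p" "2 < p" "\<bar>e\<bar> = 1"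
  shows "Legendre (Legendre_rep p e) (int p) = e"
proof (cases "e = 1")
  case True
  then show ?thesis
    using Legendre_one[of "int p"] assms(2) by (simp add: Legendre_rep_def)
next
  case False
  obtain v where "Legendre v (int p) = -1"
    using Legendre_nonresidue_exists[OF assms(1,2)] .
  then show ?thesis
    using someI[of "\<lambda>v. Legendre v (int p) = -1" v] False assms(3)
    by (auto simp: Legendre_rep_def abs_eq_iff')
qed

section \<open>Sign patterns of consecutive residues\<close>

lemma small_not_dvd:
  fixes p :: nat and c :: int
  assumes "7 \<le> p" "0 < c" "c < 7"
  shows "\<not> int p dvd c"
  using assms zdvd_not_zless[of c "int p"] by auto

lemma consecutive_residues_exist:
  assumes "prime p" "7 \<le> p"
  obtains g where "Legendre g (int p) = 1" "Legendre (g + 1) (int p) = 1"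
proof -
  let ?L = "\<lambda>x. Legendre x (int p)"
  have p2: "2 < p"
    using assms(2) by simp
  have nd: "\<not> int p dvd c" if "c \<in> {1..6}" for c :: int
    using small_not_dvd[OF assms(2), of c] that by auto
  have L2: "?L 2 = 1 \<or> ?L 2 = -1" and L5: "?L 5 = 1 \<or> ?L 5 = -1"
    using nd[of 2] nd[of 5] abs_Legendre_eq_1_iff[of _ "int p"] by (auto simp: abs_eq_iff')
  have sq: "?L 4 = 1" "?L 9 = 1"
    using Legendre_square[OF assms(1), of 2] Legendre_square[OF assms(1), of 3] nd[of 2] nd[of 3]
    by simp_all
  \<comment> \<open>one of the pairs \<open>(1, 2)\<close>, \<open>(4, 5)\<close>, \<open>(9, 10)\<close> works, since \<open>10 = 2 \<cdot> 5\<close>\<close>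
  have "?L 10 = ?L 2 * ?L 5"
    using Legendre_mult[OF assms(1) p2, of 2 5] by simp
  then show ?thesis
    using that[of 1] that[of 4] that[of 9] L2 L5 sq Legendre_one[of "int p"] p2 by fastforce
qed

lemma residue_before_nonresidue_exists:
  assumes "prime p" "2 < p"
  obtains g where "Legendre g (int p) = 1" "Legendre (g + 1) (int p) = -1"
proof (rule ccontr)
  note found = that
  assume none: "\<not> thesis"
  \<comment> \<open>then the symbol stays \<open>1\<close> all the way from \<open>1\<close> to \<open>p - 1\<close>, so there is no nonresidue\<close>
  have "Legendre (int m) (int p) = 1" if "1 \<le> m" "m < p" for m
    using that
  proof (induction m)
    case (Suc m)
    show ?case
    proof (cases "m = 0")
      case False
      then have "Legendre (int m) (int p) = 1"
        using Suc by simp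
      moreover have "\<not> int p dvd int (Suc m)"
        using Suc.prems by (auto dest: zdvd_imp_le)
      ultimately show ?thesis
        using none found[of "int m"] abs_Legendre_eq_1_iff[of "int (Suc m)" "int p"]
        by (auto simp: add.commute abs_eq_iff')
    qed (use assms Legendre_one in simp)
  qed simp
  moreover obtain v where v: "Legendre v (int p) = -1"
    using Legendre_nonresidue_exists[OF assms] .
  then have "Legendre (int (nat (v mod int p))) (int p) = -1"
    using Legendre_cong[of v "v mod int p" "int p"] assms(2) by (simp add: cong_def)
  moreover have "nat (v mod int p) \<noteq> 0"
  proof -
    have "v mod int p \<noteq> 0"
      using v abs_Legendre_eq_1_iff[of v "int p"] by (auto simp: dvd_eq_mod_eq_0)
    moreover have "0 \<le> v mod int p"
      using assms(2) by simp
    ultimately show ?thesis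
      by simp
  qed
  moreover have "nat (v mod int p) < p"
    using assms(2) by (simp add: nat_less_iff)
  ultimately show False
    by (metis One_nat_def Suc_leI neq0_conv one_neq_neg_one)
qed

lemma Legendre_reflect:
  assumes "prime p" "2 < p"
  shows "Legendre (-1 - g) (int p) = Legendre (-1) (int p) * Legendre (g + 1) (int p)"
    and "Legendre (-1 - g + 1) (int p) = Legendre (-1) (int p) * Legendre g (int p)"
  using Legendre_mult[OF assms, of "-1" "g + 1"] Legendre_mult[OF assms, of "-1" g]
  by (simp_all add: algebra_simps)

lemma Legendre_invert:
  assumes "prime p" "2 < p" "\<not> int p dvd g"
  obtains h where "Legendre h (int p) = Legendre g (int p)"
    and "Legendre (h + 1) (int p) = Legendre g (int p) * Legendre (g + 1) (int p)"
proof -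
  obtain h where h: "[g * h = 1] (mod int p)"
    using mod_inverse_exists[OF assms(1,3)] .
  \<comment> \<open>\<open>h + 1 \<equiv> h (g + 1)\<close> for the inverse \<open>h\<close> of \<open>g\<close>\<close>
  have "[h * (g + 1) = 1 + h] (mod int p)"
    using cong_add[OF h cong_refl[of h]] by (simp add: algebra_simps)
  then have "Legendre (h + 1) (int p) = Legendre h (int p) * Legendre (g + 1) (int p)"
    using Legendre_cong Legendre_mult[OF assms(1,2)] by (metis add.commute)
  then show ?thesis
    using that Legendre_mod_inverse[OF assms(1,2) h] by simp
qed

lemma consecutive_Legendre_pattern:
  assumes "prime p" "7 \<le> p" "\<bar>e\<^sub>1\<bar> = 1" "\<bar>e\<^sub>2\<bar> = 1"
  obtains g where "Legendre g (int p) = e\<^sub>1" "Legendre (g + 1) (int p) = e\<^sub>2"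
proof -
  let ?L = "\<lambda>x. Legendre x (int p)"
  have p2: "2 < p"
    using assms by simp
  obtain g\<^sub>1 where QQ: "?L g\<^sub>1 = 1" "?L (g\<^sub>1 + 1) = 1"
    using consecutive_residues_exist[OF assms(1,2)] .
  obtain g\<^sub>2 where QN: "?L g\<^sub>2 = 1" "?L (g\<^sub>2 + 1) = -1"
    using residue_before_nonresidue_exists[OF assms(1) p2] .
  have nd: "\<not> int p dvd x" if "?L x = 1 \<or> ?L x = -1" for x
    using that abs_Legendre_eq_1_iff[of x "int p"] by auto
  \<comment> \<open>reflection and inversion turn \<open>QN\<close> (if \<open>-1\<close> is a residue) or \<open>QQ\<close> (otherwise)
    into the two patterns that start with a nonresidue\<close>
  have "(\<exists>g. ?L g = -1 \<and> ?L (g + 1) = 1) \<and> (\<exists>g. ?L g = -1 \<and> ?L (g + 1) = -1)"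
  proof (cases "?L (-1) = 1")
    case True
    then have NQ: "?L (-1 - g\<^sub>2) = -1" "?L (-1 - g\<^sub>2 + 1) = 1"
      using Legendre_reflect[OF assms(1) p2, of g\<^sub>2] QN by simp_all
    obtain h where "?L h = -1" "?L (h + 1) = -1"
      using Legendre_invert[OF assms(1) p2, of "-1 - g\<^sub>2"] NQ nd by auto
    then show ?thesis
      using NQ by blast
  next
    case False
    then have "?L (-1) = -1"
      using abs_Legendre_eq_1_iff[of "-1" "int p"] p2 by (auto simp: abs_eq_iff')
    then have NN: "?L (-1 - g\<^sub>1) = -1" "?L (-1 - g\<^sub>1 + 1) = -1"
      using Legendre_reflect[OF assms(1) p2, of g\<^sub>1] QQ by simp_all
    obtain h where "?L h = -1" "?L (h + 1) = 1"
      using Legendre_invert[OF assms(1) p2, of "-1 - g\<^sub>1"] NN nd by auto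
    then show ?thesis
      using NN by blast
  qed
  then show ?thesis
    using that QQ QN assms(3,4) by (auto simp: abs_eq_iff')
qed

section \<open>Weighted zero sums modulo one prime\<close>

definition local_solution :: "nat \<Rightarrow> (nat \<Rightarrow> int) \<Rightarrow> nat set \<Rightarrow> (nat \<Rightarrow> int) \<Rightarrow> bool" where
  "local_solution p y T a \<longleftrightarrow> (\<forall>i\<in>T. \<not> int p dvd a i) \<and> int p dvd (\<Sum>i\<in>T. a i * y i)"

lemma two_term_weights_exist:
  fixes p :: nat and y\<^sub>1 y\<^sub>2 t :: int
  assumes p: "prime p" "7 \<le> p"
    and nd: "\<not> int p dvd y\<^sub>1" "\<not> int p dvd y\<^sub>2" "\<not> int p dvd t"
    and e: "\<bar>e\<^sub>1\<bar> = 1" "\<bar>e\<^sub>2\<bar> = 1"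
  obtains a\<^sub>1 a\<^sub>2 where "Legendre a\<^sub>1 (int p) = e\<^sub>1" "Legendre a\<^sub>2 (int p) = e\<^sub>2"
    "[a\<^sub>1 * y\<^sub>1 + a\<^sub>2 * y\<^sub>2 = t] (mod int p)"
proof -
  let ?L = "\<lambda>x. Legendre x (int p)"
  have p2: "2 < p"
    using p by simp
  have abs1: "\<bar>?L x\<bar> = 1" if "\<not> int p dvd x" for x
    using that by (simp add: abs_Legendre_eq_1_iff)
  have sq: "?L x * ?L x = 1" if "\<not> int p dvd x" for x
    using abs1[OF that] by (auto simp: abs_eq_iff')
  have "\<not> int p dvd -1"
    using p2 by simp
  obtain z\<^sub>1 where z\<^sub>1: "[y\<^sub>1 * z\<^sub>1 = 1] (mod int p)"
    using mod_inverse_exists[OF p(1) nd(1)] .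
  obtain z\<^sub>2 where z\<^sub>2: "[y\<^sub>2 * z\<^sub>2 = 1] (mod int p)"
    using mod_inverse_exists[OF p(1) nd(2)] .
  have "\<bar>e\<^sub>1 * ?L (-1) * ?L t * ?L y\<^sub>1\<bar> = 1" "\<bar>e\<^sub>2 * ?L t * ?L y\<^sub>2\<bar> = 1"
    using e abs1 nd \<open>\<not> int p dvd -1\<close> by (simp_all add: abs_mult)
  then obtain g where g: "?L g = e\<^sub>1 * ?L (-1) * ?L t * ?L y\<^sub>1" "?L (g + 1) = e\<^sub>2 * ?L t * ?L y\<^sub>2"
    using consecutive_Legendre_pattern[OF p] by metis
  \<comment> \<open>\<open>a\<^sub>1 y\<^sub>1 + a\<^sub>2 y\<^sub>2 \<equiv> -g t + (g + 1) t = t\<close>, and \<open>g\<close> was chosen to fix both symbols\<close>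
  define a\<^sub>1 where "a\<^sub>1 = (-1) * g * t * z\<^sub>1"
  define a\<^sub>2 where "a\<^sub>2 = (g + 1) * t * z\<^sub>2"
  have "?L a\<^sub>1 = ?L (-1) * ?L g * ?L t * ?L z\<^sub>1" "?L a\<^sub>2 = ?L (g + 1) * ?L t * ?L z\<^sub>2"
    unfolding a\<^sub>1_def a\<^sub>2_def by (simp_all only: Legendre_mult[OF p(1) p2])
  moreover have "?L z\<^sub>1 = ?L y\<^sub>1" "?L z\<^sub>2 = ?L y\<^sub>2"
    using Legendre_mod_inverse[OF p(1) p2] z\<^sub>1 z\<^sub>2 by auto
  ultimately have "?L a\<^sub>1 = e\<^sub>1 * (?L (-1) * ?L (-1)) * (?L t * ?L t) * (?L y\<^sub>1 * ?L y\<^sub>1)"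
    "?L a\<^sub>2 = e\<^sub>2 * (?L t * ?L t) * (?L y\<^sub>2 * ?L y\<^sub>2)"
    using g by (simp_all add: algebra_simps)
  then have "?L a\<^sub>1 = e\<^sub>1" "?L a\<^sub>2 = e\<^sub>2"
    using sq nd \<open>\<not> int p dvd -1\<close> by simp_all
  moreover have "[a\<^sub>1 * y\<^sub>1 + a\<^sub>2 * y\<^sub>2 = (-1) * g * t * 1 + (g + 1) * t * 1] (mod int p)"
  proof -
    have "a\<^sub>1 * y\<^sub>1 + a\<^sub>2 * y\<^sub>2 = (-1) * g * t * (y\<^sub>1 * z\<^sub>1) + (g + 1) * t * (y\<^sub>2 * z\<^sub>2)"
      unfolding a\<^sub>1_def a\<^sub>2_def by (simp add: algebra_simps)
    then show ?thesis
      using z\<^sub>1 z\<^sub>2 by (simp only:) (intro cong_add cong_mult cong_refl)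
  qed
  ultimately show ?thesis
    using that by (simp add: algebra_simps)
qed

lemma three_term_weights_exist:
  fixes p :: nat and y\<^sub>1 y\<^sub>2 y\<^sub>3 t :: int
  assumes p: "prime p" "7 \<le> p"
    and nd: "\<not> int p dvd y\<^sub>1" "\<not> int p dvd y\<^sub>2" "\<not> int p dvd y\<^sub>3"
    and e: "\<bar>e\<^sub>1\<bar> = 1" "\<bar>e\<^sub>2\<bar> = 1" "\<bar>e\<^sub>3\<bar> = 1"
  obtains a\<^sub>1 a\<^sub>2 a\<^sub>3 where "Legendre a\<^sub>1 (int p) = e\<^sub>1" "Legendre a\<^sub>2 (int p) = e\<^sub>2"
    "Legendre a\<^sub>3 (int p) = e\<^sub>3" "[a\<^sub>1 * y\<^sub>1 + a\<^sub>2 * y\<^sub>2 + a\<^sub>3 * y\<^sub>3 = t] (mod int p)"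
proof -
  note found = that
  have p2: "2 < p"
    using p by simp
  have reduce: thesis
    if a\<^sub>3: "Legendre a\<^sub>3 (int p) = e\<^sub>3" and rest: "\<not> int p dvd (t - a\<^sub>3 * y\<^sub>3)" for a\<^sub>3
  proof -
    obtain a\<^sub>1 a\<^sub>2 where "Legendre a\<^sub>1 (int p) = e\<^sub>1" "Legendre a\<^sub>2 (int p) = e\<^sub>2"
      "[a\<^sub>1 * y\<^sub>1 + a\<^sub>2 * y\<^sub>2 = t - a\<^sub>3 * y\<^sub>3] (mod int p)"
      using two_term_weights_exist[OF p nd(1,2) rest e(1,2)] .
    moreover from this(3) have "[a\<^sub>1 * y\<^sub>1 + a\<^sub>2 * y\<^sub>2 + a\<^sub>3 * y\<^sub>3 = t] (mod int p)"
      using cong_add[OF _ cong_refl[of "a\<^sub>3 * y\<^sub>3"]] by fastforce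
    ultimately show thesis
      using a\<^sub>3 found by blast
  qed
  let ?r = "Legendre_rep p e\<^sub>3"
  have r: "Legendre ?r (int p) = e\<^sub>3"
    using Legendre_Legendre_rep[OF p(1) p2 e(3)] .
  \<comment> \<open>if \<open>a\<^sub>3 = ?r\<close> leaves \<open>t - a\<^sub>3 y\<^sub>3 \<equiv> 0\<close>, then \<open>a\<^sub>3 = 4 ?r\<close> does not, because \<open>p\<close> does not divide \<open>3\<close>\<close>
  show thesis
  proof (cases "int p dvd (t - ?r * y\<^sub>3)")
    case False
    then show thesis
      using reduce r by blast
  next
    case True
    have "\<not> int p dvd 3 * (?r * y\<^sub>3)"
      using small_not_dvd[OF p(2), of 3] r e(3) nd(3) p(1)
      by (auto simp: prime_dvd_mult_iff abs_Legendre_eq_1_iff[symmetric])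
    then have "\<not> int p dvd (t - 4 * ?r * y\<^sub>3)"
      using True dvd_diff[of "int p" "t - ?r * y\<^sub>3" "t - 4 * ?r * y\<^sub>3"]
      by (auto simp: algebra_simps)
    moreover have "Legendre (4 * ?r) (int p) = e\<^sub>3"
      using Legendre_mult[OF p(1) p2, of "2\<^sup>2" "?r"] Legendre_square[OF p(1), of 2]
        small_not_dvd[OF p(2), of 2] r by simp
    ultimately show thesis
      using reduce by (simp add: mult.assoc)
  qed
qed

lemma prescribed_local_solution_exists:
  fixes p :: nat and y :: "nat \<Rightarrow> int"
  assumes p: "prime p" "7 \<le> p" and "finite T"
    and three: "3 \<le> card {i\<in>T. \<not> int p dvd y i}" and e: "\<forall>i\<in>T. \<bar>e i\<bar> = 1"
  obtains a where "\<forall>i\<in>T. Legendre (a i) (int p) = e i" "int p dvd (\<Sum>i\<in>T. a i * y i)"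
proof -
  obtain U where "U \<subseteq> {i\<in>T. \<not> int p dvd y i}" "card U = 3"
    using obtain_subset_with_card_n[OF three] by metis
  then obtain u v w where U: "u \<in> T" "v \<in> T" "w \<in> T" "distinct [u, v, w]"
    and nd: "\<not> int p dvd y u" "\<not> int p dvd y v" "\<not> int p dvd y w"
    by (auto simp: card_3_iff)
  define s where "s = (\<Sum>i\<in>T - {u, v, w}. Legendre_rep p (e i) * y i)"
  obtain a\<^sub>1 a\<^sub>2 a\<^sub>3 where a: "Legendre a\<^sub>1 (int p) = e u" "Legendre a\<^sub>2 (int p) = e v"
    "Legendre a\<^sub>3 (int p) = e w" "[a\<^sub>1 * y u + a\<^sub>2 * y v + a\<^sub>3 * y w = - s] (mod int p)"
    using three_term_weights_exist[OF p nd] e U(1-3) by metis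
  define a where "a i = (if i = u then a\<^sub>1 else if i = v then a\<^sub>2 else if i = w then a\<^sub>3
    else Legendre_rep p (e i))" for i
  have "(\<Sum>i\<in>T. a i * y i) = (\<Sum>i\<in>{u, v, w}. a i * y i) + (\<Sum>i\<in>T - {u, v, w}. a i * y i)"
    using \<open>finite T\<close> U(1-3) by (subst sum.subset_diff[of "{u, v, w}"]) auto
  also have "\<dots> = a\<^sub>1 * y u + a\<^sub>2 * y v + a\<^sub>3 * y w + s"
    using U(4) unfolding s_def a_def by (auto intro!: sum.cong)
  finally have "int p dvd (\<Sum>i\<in>T. a i * y i)"
    using a(4) by (simp add: cong_iff_dvd_diff)
  moreover have "\<forall>i\<in>T. Legendre (a i) (int p) = e i"
    using a e Legendre_Legendre_rep[OF p(1)] p(2) by (auto simp: a_def)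
  ultimately show thesis
    using that by blast
qed

lemma card_ne_1_cases:
  assumes "finite N" "card N \<noteq> 1"
  obtains "N = {}" | "3 \<le> card N" | k j where "N = {k, j}" "k \<noteq> j" "j \<noteq> x"
proof -
  consider "card N = 0" | "card N = 2" | "3 \<le> card N"
    using assms(2) by linarith
  then show thesis
  proof cases
    case 1
    then show thesis
      using assms(1) that(1) by simp
  next
    case 2
    then obtain u v where uv: "N = {u, v}" "u \<noteq> v"
      unfolding card_2_iff by blast
    show thesis
    proof (cases "v = x")
      case True
      then show thesis
        using uv that(3)[of v u] by (simp add: insert_commute)
    next
      case False
      then show thesis
        using uv that(3)[of u v] by simp
    qed
  next
    case 3
    then show thesis
      by (rule that(2))
  qed
qed

lemma local_solution_two_nondivisible:
  fixes p :: nat and y :: "nat \<Rightarrow> int"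
  assumes p: "prime p" and "finite T" and N: "{i\<in>T. \<not> int p dvd y i} = {k, j}" "k \<noteq> j"
  obtains a where "local_solution p y T a" "\<And>i. i \<noteq> j \<Longrightarrow> a i = 1"
proof -
  have "k \<in> T" "j \<in> T" "\<not> int p dvd y k" "\<not> int p dvd y j"
    using N(1) by (auto simp: set_eq_iff)
  have rest: "int p dvd y i" if "i \<in> T - {j} - {k}" for i
    using that N(1) by (auto simp: set_eq_iff)
  obtain z where z: "[y j * z = 1] (mod int p)"
    using mod_inverse_exists[OF p \<open>\<not> int p dvd y j\<close>] .
  \<comment> \<open>weight \<open>-y\<^sub>k / y\<^sub>j\<close> at \<open>j\<close> cancels the only other term prime to \<open>p\<close>\<close>
  define a where "a i = (if i = j then - y k * z else 1)" for i
  have "\<not> int p dvd z"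
    using cong_dvd_iff[OF z] prime_gt_1_nat[OF p] by auto
  then have "\<forall>i\<in>T. \<not> int p dvd a i"
    using \<open>\<not> int p dvd y k\<close> p prime_gt_1_nat[OF p] by (auto simp: a_def prime_dvd_mult_iff)
  have "(\<Sum>i\<in>T. a i * y i) = a j * y j + (\<Sum>i\<in>T - {j}. a i * y i)"
    using \<open>finite T\<close> \<open>j \<in> T\<close> by (rule sum.remove)
  also have "(\<Sum>i\<in>T - {j}. a i * y i) = (\<Sum>i\<in>T - {j}. y i)"
    by (rule sum.cong) (auto simp: a_def)
  also have "\<dots> = y k + (\<Sum>i\<in>T - {j} - {k}. y i)"
    using \<open>finite T\<close> \<open>k \<in> T\<close> N(2) by (intro sum.remove) auto
  finally have "(\<Sum>i\<in>T. a i * y i) = y k * (1 - y j * z) + (\<Sum>i\<in>T - {j} - {k}. y i)"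
    by (simp add: a_def algebra_simps)
  moreover have "int p dvd y k * (1 - y j * z)"
    using z by (simp add: cong_iff_dvd_diff dvd_diff_commute)
  moreover have "int p dvd (\<Sum>i\<in>T - {j} - {k}. y i)"
    using rest by (rule dvd_sum)
  ultimately have "local_solution p y T a"
    using \<open>\<forall>i\<in>T. \<not> int p dvd a i\<close> by (simp add: local_solution_def)
  then show thesis
    by (rule that) (simp add: a_def)
qed

lemma local_solution_exists:
  fixes p :: nat and y :: "nat \<Rightarrow> int"
  assumes p: "prime p" "7 \<le> p" and "finite T"
    and not_one: "card {i\<in>T. \<not> int p dvd y i} \<noteq> 1"
  obtains a where "local_solution p y T a" "i\<^sub>0 \<in> T \<longrightarrow> Legendre (a i\<^sub>0) (int p) = 1"
proof -
  let ?N = "{i\<in>T. \<not> int p dvd y i}"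
  have L1: "Legendre 1 (int p) = 1"
    using Legendre_one p prime_gt_1_nat by simp
  have "finite ?N"
    using \<open>finite T\<close> by simp
  then consider "?N = {}" | "3 \<le> card ?N" | k j where "?N = {k, j}" "k \<noteq> j" "j \<noteq> i\<^sub>0"
    using not_one by (rule card_ne_1_cases)
  then show thesis
  proof cases
    case 1
    then have "int p dvd (\<Sum>i\<in>T. 1 * y i)"
      by (intro dvd_sum) auto
    then have "local_solution p y T (\<lambda>_. 1)"
      using prime_gt_1_nat[OF p(1)] by (simp add: local_solution_def)
    then show thesis
      by (rule that) (simp add: L1)
  next
    case 2
    have "\<forall>i\<in>T. \<bar>1 :: int\<bar> = 1"
      by simp
    from prescribed_local_solution_exists[OF p \<open>finite T\<close> 2 this]
    obtain a where a: "\<forall>i\<in>T. Legendre (a i) (int p) = 1" "int p dvd (\<Sum>i\<in>T. a i * y i)" .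
    then have "local_solution p y T a"
      by (simp add: local_solution_def flip: abs_Legendre_eq_1_iff)
    then show thesis
      by (rule that) (simp add: a(1))
  next
    case 3
    obtain a where a: "local_solution p y T a" "\<And>i. i \<noteq> j \<Longrightarrow> a i = 1"
      using local_solution_two_nondivisible[OF p(1) \<open>finite T\<close> 3(1,2)] by metis
    have "Legendre (a i\<^sub>0) (int p) = 1"
      using a(2)[of i\<^sub>0] 3(3) L1 by auto
    then show thesis
      using a(1) by (blast intro: that)
  qed
qed

section \<open>Gluing local solutions\<close>

lemma multiplicity_squarefree:
  fixes n :: nat
  assumes "squarefree n" "p \<in> prime_factors n"
  shows "multiplicity p n = 1"
  using assms squarefree_factorial_semiring'[of n] by (cases "n = 0") auto

lemma bigOmega_squarefree:
  assumes "squarefree n"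
  shows "bigOmega n = card (prime_factors n)"
proof -
  have "bigOmega n = (\<Sum>p\<in>prime_factors n. count (prime_factorization n) p)"
    unfolding bigOmega_def by (rule size_multiset_overloaded_eq)
  also have "\<dots> = (\<Sum>p\<in>prime_factors n. 1)"
    using multiplicity_squarefree[OF assms] by (intro sum.cong) (auto simp: count_prime_factorization)
  finally show ?thesis
    by simp
qed

lemma jacobi_squarefree:
  assumes "squarefree n"
  shows "jacobi a n = (\<Prod>p\<in>prime_factors n. Legendre (int a) (int p))"
  unfolding jacobi_def using multiplicity_squarefree[OF assms] by (intro prod.cong) auto

lemma squarefree_dvdI:
  fixes n m :: nat
  assumes "squarefree n" and dvd: "\<And>p. p \<in> prime_factors n \<Longrightarrow> p dvd m"
  shows "n dvd m"
proof (cases "m = 0")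
  case False
  have "n \<noteq> 0"
    using assms(1) by (metis not_squarefree_0)
  then show ?thesis
  proof (rule multiplicity_le_imp_dvd)
    fix p :: nat
    assume "prime p"
    show "multiplicity p n \<le> multiplicity p m"
    proof (cases "p \<in> prime_factors n")
      case True
      then show ?thesis
        using dvd[OF True] multiplicity_squarefree[OF assms(1) True] False \<open>prime p\<close>
        by (simp add: Suc_le_eq prime_multiplicity_gt_zero_iff)
    qed (use \<open>n \<noteq> 0\<close> \<open>prime p\<close> in \<open>simp add: prime_factors_multiplicity\<close>)
  qed
qed simp

lemma coprime_if_prime_factors_not_dvd:
  fixes n w :: nat
  assumes "n \<noteq> 0" and "\<And>p. p \<in> prime_factors n \<Longrightarrow> \<not> p dvd w"
  shows "coprime w n"
proof (rule ccontr)
  assume "\<not> coprime w n"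
  then have "gcd w n \<noteq> 1"
    using coprime_iff_gcd_eq_1 by blast
  then obtain q where q: "prime q" "q dvd gcd w n"
    using prime_factor_nat by blast
  then have "q \<in> prime_factors n" "q dvd w"
    using assms(1) by (simp_all add: in_prime_factors_iff)
  then show False
    using assms(2) by blast
qed

lemma chinese_remainder_prime_factors:
  fixes n :: nat and c :: "nat \<Rightarrow> int"
  assumes "n \<noteq> 0"
  shows "\<exists>w<n. \<forall>p\<in>prime_factors n. [int w = c p] (mod int p)"
proof -
  have "\<forall>p\<in>prime_factors n. \<forall>q\<in>prime_factors n. p \<noteq> q \<longrightarrow> coprime (id p) (id q)"
    by (auto intro: primes_coprime)
  then obtain x where x: "\<forall>p\<in>prime_factors n. [x = nat (c p mod int p)] (mod id p)"
    using chinese_remainder_nat[of "prime_factors n" id "\<lambda>p. nat (c p mod int p)"] by auto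
  have "[int (x mod n) = c p] (mod int p)" if p: "p \<in> prime_factors n" for p
  proof -
    have "[x mod n = x] (mod p)"
      using p by (simp add: cong_def mod_mod_cancel in_prime_factors_iff)
    also have "[x = nat (c p mod int p)] (mod p)"
      using x p by simp
    finally have "[int (x mod n) = int (nat (c p mod int p))] (mod int p)"
      by (simp only: cong_int_iff)
    moreover have "int (nat (c p mod int p)) = c p mod int p"
      using p prime_gt_0_nat by (simp add: in_prime_factors_iff)
    ultimately show ?thesis
      by (simp add: cong_def)
  qed
  then show ?thesis
    using assms by (intro exI[of _ "x mod n"]) auto
qed

lemma mem_Sn_if_Legendre_prod:
  fixes n w :: nat
  assumes sq: "squarefree n" and "1 < n" "w < n" and not_dvd: "\<forall>p\<in>prime_factors n. \<not> p dvd w"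
    and prod: "(\<Prod>p\<in>prime_factors n. Legendre (int w) (int p)) = 1"
  shows "w \<in> Sn n"
proof -
  obtain q where "q \<in> prime_factors n"
    using \<open>1 < n\<close> prime_factor_nat[of n] by (auto simp: in_prime_factors_iff)
  then have "w \<noteq> 0"
    using not_dvd by (metis dvd_0_right)
  moreover have "coprime w n"
    using not_dvd \<open>1 < n\<close> by (intro coprime_if_prime_factors_not_dvd) auto
  ultimately show ?thesis
    using \<open>w < n\<close> prod by (simp add: Sn_def unitsZ_def jacobi_squarefree[OF sq])
qed

lemma Sn_zero_sum_of_local_solutions:
  fixes n :: nat and xs :: "nat list" and a :: "nat \<Rightarrow> nat \<Rightarrow> int"
  assumes sq: "squarefree n" and "1 < n" and T: "T \<noteq> {}" "T \<subseteq> {..<length xs}"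
    and local: "\<forall>p\<in>prime_factors n. local_solution p (\<lambda>i. int (xs ! i)) T (a p)"
    and signs: "\<forall>i\<in>T. (\<Prod>p\<in>prime_factors n. Legendre (a p i) (int p)) = 1"
  shows "has_wzs_subseq n (Sn n) xs"
proof -
  let ?P = "prime_factors n"
  have "\<forall>i. \<exists>w<n. \<forall>p\<in>?P. [int w = a p i] (mod int p)"
    using chinese_remainder_prime_factors \<open>1 < n\<close> by simp
  then obtain w where w: "\<And>i. w i < n" "\<And>i p. p \<in> ?P \<Longrightarrow> [int (w i) = a p i] (mod int p)"
    by metis
  have not_dvd: "\<not> p dvd w i" if "p \<in> ?P" "i \<in> T" for p i
    using local that cong_dvd_iff[OF w(2)[OF that(1)]] by (auto simp: local_solution_def)
  have "w i \<in> Sn n" if "i \<in> T" for i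
  proof (rule mem_Sn_if_Legendre_prod[OF sq \<open>1 < n\<close> w(1)])
    show "\<forall>p\<in>?P. \<not> p dvd w i"
      using not_dvd that by blast
    show "(\<Prod>p\<in>?P. Legendre (int (w i)) (int p)) = 1"
      using signs that Legendre_cong[OF w(2)] by simp
  qed
  moreover have "n dvd (\<Sum>i\<in>T. w i * xs ! i)"
  proof (rule squarefree_dvdI[OF sq])
    fix p
    assume p: "p \<in> ?P"
    have "[(\<Sum>i\<in>T. int (w i) * int (xs ! i)) = (\<Sum>i\<in>T. a p i * int (xs ! i))] (mod int p)"
      using w(2)[OF p] by (intro cong_sum cong_mult cong_refl)
    moreover have "int p dvd (\<Sum>i\<in>T. a p i * int (xs ! i))"
      using local p by (simp add: local_solution_def)
    ultimately have "int p dvd (\<Sum>i\<in>T. int (w i) * int (xs ! i))"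
      using cong_dvd_iff by blast
    moreover have "int (\<Sum>i\<in>T. w i * xs ! i) = (\<Sum>i\<in>T. int (w i) * int (xs ! i))"
      by simp
    ultimately show "p dvd (\<Sum>i\<in>T. w i * xs ! i)"
      by (metis int_dvd_int_iff)
  qed
  ultimately show ?thesis
    unfolding has_wzs_subseq_def using T by (intro exI[of _ T] exI[of _ w]) auto
qed

lemma local_solution_update:
  assumes "local_solution p y T b"
    and "\<And>i. i \<in> T \<Longrightarrow> \<not> int p dvd a i" and "\<And>i. i \<in> T \<Longrightarrow> a i \<noteq> b i \<Longrightarrow> int p dvd y i"
  shows "local_solution p y T a"
proof -
  have "int p dvd (\<Sum>i\<in>T. (a i - b i) * y i)"
    using assms(3) by (intro dvd_sum) (metis dvd_mult eq_iff_diff_eq_0 mult_eq_0_iff dvd_0_right)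
  moreover have "(\<Sum>i\<in>T. a i * y i) = (\<Sum>i\<in>T. (a i - b i) * y i) + (\<Sum>i\<in>T. b i * y i)"
    by (simp add: sum.distrib[symmetric] algebra_simps)
  ultimately show ?thesis
    using assms(1,2) by (simp add: local_solution_def)
qed

lemma abs_prod_Legendre:
  assumes "\<And>p. p \<in> A \<Longrightarrow> \<not> int p dvd b p"
  shows "\<bar>\<Prod>p\<in>A. Legendre (b p) (int p)\<bar> = 1"
  unfolding abs_prod using assms by (intro prod.neutral) (simp add: abs_Legendre_eq_1_iff)

lemma prod_eq_1_if_factor_eq_rest:
  fixes f :: "'a \<Rightarrow> int"
  assumes "finite A" "x \<in> A" "f x = (\<Prod>y\<in>A - {x}. f y)" "\<bar>f x\<bar> = 1"
  shows "(\<Prod>y\<in>A. f y) = 1"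
proof -
  have "(\<Prod>y\<in>A. f y) = f x * f x"
    using assms(1-3) by (simp add: prod.remove)
  then show ?thesis
    using abs_mult_self_eq[of "f x"] assms(4) by simp
qed

section \<open>Admissible supports\<close>

definition admissible_support :: "nat \<Rightarrow> nat list \<Rightarrow> nat set \<Rightarrow> bool" where
  "admissible_support n xs T \<longleftrightarrow> T \<noteq> {} \<and> T \<subseteq> {..<length xs} \<and>
     (\<forall>p\<in>prime_factors n. card {i\<in>T. \<not> p dvd xs ! i} \<noteq> 1)"

lemma local_solutions_exist:
  assumes "admissible_support n xs T" and p7: "\<forall>p\<in>prime_factors n. 7 \<le> p"
  obtains b where "\<forall>p\<in>prime_factors n. local_solution p (\<lambda>i. int (xs ! i)) T (b p) \<and>
    (i\<^sub>0 \<in> T \<longrightarrow> Legendre (b p i\<^sub>0) (int p) = 1)"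
proof -
  have "finite T"
    using assms(1) finite_subset by (auto simp: admissible_support_def)
  have "\<exists>c. local_solution p (\<lambda>i. int (xs ! i)) T c \<and> (i\<^sub>0 \<in> T \<longrightarrow> Legendre (c i\<^sub>0) (int p) = 1)"
    if p: "p \<in> prime_factors n" for p
  proof -
    have "card {i\<in>T. \<not> int p dvd int (xs ! i)} \<noteq> 1"
      using assms(1) p by (simp add: admissible_support_def)
    then show ?thesis
      using local_solution_exists[of p T "\<lambda>i. int (xs ! i)" i\<^sub>0] p p7 \<open>finite T\<close> by auto
  qed
  then show thesis
    using that by metis
qed

lemma Sn_zero_sum_if_three_nondivisible:
  assumes sq: "squarefree n" and "1 < n" and p7: "\<forall>p\<in>prime_factors n. 7 \<le> p"
    and adm: "admissible_support n xs T"
    and p\<^sub>0: "p\<^sub>0 \<in> prime_factors n" "3 \<le> card {i\<in>T. \<not> p\<^sub>0 dvd xs ! i}"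
  shows "has_wzs_subseq n (Sn n) xs"
proof -
  let ?P = "prime_factors n" and ?y = "\<lambda>i. int (xs ! i)"
  have T: "T \<noteq> {}" "T \<subseteq> {..<length xs}" "finite T"
    using adm finite_subset by (auto simp: admissible_support_def)
  obtain b where b: "\<forall>p\<in>?P. local_solution p ?y T (b p)"
    using local_solutions_exist[OF adm p7] by metis
  \<comment> \<open>re-solve at \<open>p\<^sub>0\<close> so that its symbol cancels the product of all the others\<close>
  define e where "e i = (\<Prod>p\<in>?P - {p\<^sub>0}. Legendre (b p i) (int p))" for i
  have e: "\<forall>i\<in>T. \<bar>e i\<bar> = 1"
    using b unfolding e_def by (auto intro!: abs_prod_Legendre simp: local_solution_def)
  obtain c where c: "\<forall>i\<in>T. Legendre (c i) (int p\<^sub>0) = e i" "int p\<^sub>0 dvd (\<Sum>i\<in>T. c i * ?y i)"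
    using prescribed_local_solution_exists[of p\<^sub>0 T ?y e] p\<^sub>0 p7 T(3) e by auto
  define a where "a p = (if p = p\<^sub>0 then c else b p)" for p
  have "\<forall>p\<in>?P. local_solution p ?y T (a p)"
    using b c e by (auto simp: a_def local_solution_def abs_Legendre_eq_1_iff[symmetric])
  moreover have "(\<Prod>p\<in>?P. Legendre (a p i) (int p)) = 1" if "i \<in> T" for i
    using c e that p\<^sub>0(1) by (intro prod_eq_1_if_factor_eq_rest[of _ p\<^sub>0]) (auto simp: a_def e_def)
  ultimately show ?thesis
    using Sn_zero_sum_of_local_solutions[OF sq \<open>1 < n\<close> T(1,2)] by blast
qed

lemma prime_factor_dvd_if_not_coprime:
  fixes n x :: nat
  assumes "n \<noteq> 0" "\<not> coprime x n"
  shows "\<exists>p. p \<in> prime_factors n \<and> p dvd x"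
  using coprime_if_prime_factors_not_dvd[OF assms(1)] assms(2) by blast

lemma Sn_zero_sum_if_one_unit:
  assumes sq: "squarefree n" and "1 < n" and p7: "\<forall>p\<in>prime_factors n. 7 \<le> p"
    and adm: "admissible_support n xs T"
    and one_unit: "\<And>i j. i \<in> T \<Longrightarrow> j \<in> T \<Longrightarrow> coprime (xs ! i) n \<Longrightarrow> coprime (xs ! j) n
      \<Longrightarrow> i = j"
  shows "has_wzs_subseq n (Sn n) xs"
proof -
  let ?P = "prime_factors n" and ?y = "\<lambda>i. int (xs ! i)"
  have T: "T \<noteq> {}" "T \<subseteq> {..<length xs}"
    using adm by (auto simp: admissible_support_def)
  have P: "prime p" "2 < p" if "p \<in> ?P" for p
    using that p7 by auto
  obtain i\<^sub>0 where unit: "\<And>i. i \<in> T \<Longrightarrow> coprime (xs ! i) n \<Longrightarrow> i = i\<^sub>0"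
    using one_unit by metis
  obtain b where b: "\<forall>p\<in>?P. local_solution p ?y T (b p) \<and> (i\<^sub>0 \<in> T \<longrightarrow> Legendre (b p i\<^sub>0) (int p) = 1)"
    using local_solutions_exist[OF adm p7] by metis
  \<comment> \<open>every other term of \<open>T\<close> is divisible by some \<open>q i \<in> ?P\<close>, where its weight is free\<close>
  define q where "q i = (SOME p. p \<in> ?P \<and> p dvd xs ! i)" for i
  have q: "q i \<in> ?P \<and> q i dvd xs ! i" if "\<not> coprime (xs ! i) n" for i
  proof -
    have "\<exists>p. p \<in> ?P \<and> p dvd xs ! i"
      using prime_factor_dvd_if_not_coprime[of n "xs ! i"] that \<open>1 < n\<close> by simp
    then show ?thesis
      unfolding q_def by (rule someI_ex)
  qed
  define e where "e i = (\<Prod>p\<in>?P - {q i}. Legendre (b p i) (int p))" for i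
  have e: "\<bar>e i\<bar> = 1" if "i \<in> T" for i
    using b that unfolding e_def by (auto intro!: abs_prod_Legendre simp: local_solution_def)
  define a where "a p i = (if \<not> coprime (xs ! i) n \<and> p = q i then Legendre_rep p (e i) else b p i)" for p i
  have "local_solution p ?y T (a p)" if p: "p \<in> ?P" for p
  proof (rule local_solution_update)
    show "local_solution p ?y T (b p)"
      using b p by blast
    show "\<not> int p dvd a p i" if "i \<in> T" for i
      using b p Legendre_Legendre_rep[OF P[OF p] e[OF that]] e[OF that] that
      by (auto simp: a_def local_solution_def abs_Legendre_eq_1_iff[symmetric])
    show "int p dvd ?y i" if "i \<in> T" "a p i \<noteq> b p i" for i
      using that q by (auto simp: a_def split: if_splits)
  qed
  moreover have "(\<Prod>p\<in>?P. Legendre (a p i) (int p)) = 1" if i: "i \<in> T" for i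
  proof (cases "coprime (xs ! i) n")
    case True
    then show ?thesis
      using b unit[OF i True] i by (intro prod.neutral) (auto simp: a_def)
  next
    case False
    then show ?thesis
      using Legendre_Legendre_rep[OF P e[OF i]] q[OF False] e[OF i]
      by (intro prod_eq_1_if_factor_eq_rest[of _ "q i"]) (auto simp: a_def e_def)
  qed
  ultimately show ?thesis
    using Sn_zero_sum_of_local_solutions[OF sq \<open>1 < n\<close> T] by blast
qed

lemma not_dvd_if_coprime:
  fixes x n :: nat
  assumes "coprime x n" "p \<in> prime_factors n"
  shows "\<not> p dvd x"
  using assms by (metis coprime_common_divisor in_prime_factors_iff not_prime_unit)

lemma Sn_zero_sum_if_admissible_support:
  assumes sq: "squarefree n" and "1 < n" and p7: "\<forall>p\<in>prime_factors n. 7 \<le> p"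
    and zn: "Zn_seq n xs" and len: "3 \<le> length xs" and adm: "admissible_support n xs T"
  shows "has_wzs_subseq n (Sn n) xs"
proof -
  let ?P = "prime_factors n" and ?U = "{..<length xs}"
  consider (zero) i where "i < length xs" "xs ! i = 0"
    | (two_units) i\<^sub>1 i\<^sub>2 where "i\<^sub>1 < length xs" "i\<^sub>2 < length xs" "i\<^sub>1 \<noteq> i\<^sub>2"
        "coprime (xs ! i\<^sub>1) n" "coprime (xs ! i\<^sub>2) n" "\<forall>i<length xs. xs ! i \<noteq> 0"
    | (one_unit) "\<And>i j. i \<in> T \<Longrightarrow> j \<in> T \<Longrightarrow> coprime (xs ! i) n \<Longrightarrow> coprime (xs ! j) n
        \<Longrightarrow> i = j"
    using adm unfolding admissible_support_def by (metis lessThan_iff subsetD)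
  then show ?thesis
  proof cases
    case zero
    then have "admissible_support n xs {i}"
      by (simp add: admissible_support_def Collect_conv_if)
    then show ?thesis
      using Sn_zero_sum_if_one_unit[OF sq \<open>1 < n\<close> p7] by blast
  next
    case two_units
    \<comment> \<open>all terms together: every prime misses both units, and some prime misses a third term\<close>
    obtain k where k: "k < length xs" "k \<noteq> i\<^sub>1" "k \<noteq> i\<^sub>2"
      using len by (metis (full_types) less_le_trans nat_neq_iff numeral_3_eq_3 less_Suc_eq)
    have "xs ! k < n"
      using zn k(1) unfolding Zn_seq_def by (meson lessThan_iff nth_mem subsetD)
    then have "\<not> n dvd xs ! k"
      using k(1) two_units(6) by (auto dest: dvd_imp_le)
    then obtain p\<^sub>0 where p\<^sub>0: "p\<^sub>0 \<in> ?P" "\<not> p\<^sub>0 dvd xs ! k"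
      using squarefree_dvdI[OF sq] by blast
    have units: "{i\<^sub>1, i\<^sub>2} \<subseteq> {i\<in>?U. \<not> p dvd xs ! i}" if "p \<in> ?P" for p
      using two_units that not_dvd_if_coprime by auto
    have "card {i\<^sub>1, i\<^sub>2} \<le> card {i\<in>?U. \<not> p dvd xs ! i}" if "p \<in> ?P" for p
      using units[OF that] by (intro card_mono) auto
    then have "admissible_support n xs ?U"
      using two_units(1,3) by (fastforce simp: admissible_support_def)
    moreover have "card {i\<^sub>1, i\<^sub>2, k} \<le> card {i\<in>?U. \<not> p\<^sub>0 dvd xs ! i}"
      using units[OF p\<^sub>0(1)] p\<^sub>0(2) k(1) by (intro card_mono) auto
    then have "3 \<le> card {i\<in>?U. \<not> p\<^sub>0 dvd xs ! i}"
      using two_units(3) k by simp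
    ultimately show ?thesis
      using Sn_zero_sum_if_three_nondivisible[OF sq \<open>1 < n\<close> p7 _ p\<^sub>0(1)] by blast
  next
    case one_unit
    then show ?thesis
      using Sn_zero_sum_if_one_unit[OF sq \<open>1 < n\<close> p7 adm] by blast
  qed
qed

lemma admissible_support_if_unit_zero_sum:
  assumes "has_wzs_subseq n (unitsZ n) xs"
  shows "\<exists>T. admissible_support n xs T"
proof -
  obtain I w where I: "I \<subseteq> {..<length xs}" "I \<noteq> {}" "\<forall>i\<in>I. w i \<in> unitsZ n"
    and sum: "(\<Sum>i\<in>I. w i * xs ! i) mod n = 0"
    using assms unfolding has_wzs_subseq_def by (elim exE conjE) (rule that)
  have "card {i\<in>I. \<not> p dvd xs ! i} \<noteq> 1" if p: "p \<in> prime_factors n" for p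
  proof
    assume "card {i\<in>I. \<not> p dvd xs ! i} = 1"
    then obtain j where j: "{i\<in>I. \<not> p dvd xs ! i} = {j}"
      by (auto simp: card_1_singleton_iff)
    \<comment> \<open>modulo \<open>p\<close> only the \<open>j\<close>-th term survives, and it is a unit times a non-multiple of \<open>p\<close>\<close>
    have "finite I"
      using I(1) finite_subset by blast
    have "p dvd (\<Sum>i\<in>I. w i * xs ! i)"
      using sum p by (auto simp: in_prime_factors_iff intro: dvd_trans[of p n])
    moreover have "(\<Sum>i\<in>I. w i * xs ! i) = w j * xs ! j + (\<Sum>i\<in>I - {j}. w i * xs ! i)"
      using \<open>finite I\<close> j by (intro sum.remove) auto
    moreover have "p dvd (\<Sum>i\<in>I - {j}. w i * xs ! i)"
      using j by (intro dvd_sum) (auto intro: dvd_mult)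
    ultimately have "p dvd w j * xs ! j"
      by (simp add: dvd_add_left_iff)
    moreover have "coprime (w j) n" "\<not> p dvd xs ! j"
      using I(3) j by (auto simp: unitsZ_def)
    moreover have "prime p"
      using p by auto
    ultimately show False
      using not_dvd_if_coprime[OF _ p] by (auto simp: prime_dvd_mult_iff)
  qed
  then show ?thesis
    using I(1,2) by (auto simp: admissible_support_def)
qed

lemma exists_nonempty_subset_card_ne_1:
  fixes bad :: "'a \<Rightarrow> 'b \<Rightarrow> bool"
  assumes "finite P" "finite X" "card {p\<in>P. \<exists>i\<in>X. bad p i} < card X"
  shows "\<exists>T\<subseteq>X. T \<noteq> {} \<and> (\<forall>p\<in>P. card {i\<in>T. bad p i} \<noteq> 1)"
  using assms(2,3)
proof (induction X rule: finite_psubset_induct)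
  case (psubset X)
  show ?case
  proof (cases "\<forall>p\<in>P. card {i\<in>X. bad p i} \<noteq> 1")
    case True
    then show ?thesis
      using psubset.prems by auto
  next
    case False
    \<comment> \<open>drop the only bad index \<open>i\<close> of some \<open>p\<close>: then \<open>p\<close> has no bad index left\<close>
    then obtain p i where p: "p \<in> P" "{j\<in>X. bad p j} = {i}"
      by (auto simp: card_1_singleton_iff)
    have "i \<in> X"
      using p(2) by blast
    let ?A = "\<lambda>Y. {q\<in>P. \<exists>j\<in>Y. bad q j}"
    have "?A (X - {i}) \<subseteq> ?A X - {p}"
      using p(2) by blast
    moreover have "p \<in> ?A X" "finite (?A X)"
      using p assms(1) by auto
    ultimately have "card (?A (X - {i})) \<le> card (?A X) - 1" "0 < card (?A X)"
      using card_mono[of "?A X - {p}" "?A (X - {i})"] card_gt_0_iff by auto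
    moreover have "card (X - {i}) = card X - 1"
      using \<open>i \<in> X\<close> psubset.hyps(1) by simp
    ultimately have "card (?A (X - {i})) < card (X - {i})"
      using psubset.prems by linarith
    moreover have "X - {i} \<subset> X"
      using \<open>i \<in> X\<close> by blast
    ultimately obtain T where "T \<subseteq> X - {i}" "T \<noteq> {}" "\<forall>p\<in>P. card {i\<in>T. bad p i} \<noteq> 1"
      using psubset.IH by meson
    then show ?thesis
      by blast
  qed
qed

lemma admissible_support_exists:
  assumes "card (prime_factors n) < length xs"
  shows "\<exists>T. admissible_support n xs T"
proof -
  have "card {p\<in>prime_factors n. \<exists>i\<in>{..<length xs}. \<not> p dvd xs ! i} \<le> card (prime_factors n)"
    by (intro card_mono) auto
  then show ?thesis
    using assms exists_nonempty_subset_card_ne_1[of "prime_factors n" "{..<length xs}" "\<lambda>p i. \<not> p dvd xs ! i"]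
    by (auto simp: admissible_support_def)
qed

section \<open>The Davenport constants\<close>

lemma has_wzs_subseq_mono:
  assumes "A \<subseteq> B" "has_wzs_subseq n A xs"
  shows "has_wzs_subseq n B xs"
proof -
  obtain I w where "I \<subseteq> {..<length xs}" "I \<noteq> {}" "\<forall>i\<in>I. w i \<in> A" "(\<Sum>i\<in>I. w i * xs ! i) mod n = 0"
    using assms(2) unfolding has_wzs_subseq_def by (elim exE conjE) (rule that)
  then show ?thesis
    unfolding has_wzs_subseq_def using assms(1) by (intro exI[of _ I] exI[of _ w]) auto
qed

lemma has_wzs_subseq_take:
  assumes "has_wzs_subseq n A (take m xs)"
  shows "has_wzs_subseq n A xs"
proof -
  obtain I w where I: "I \<subseteq> {..<length (take m xs)}" "I \<noteq> {}" "\<forall>i\<in>I. w i \<in> A"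
    and sum: "(\<Sum>i\<in>I. w i * take m xs ! i) mod n = 0"
    using assms unfolding has_wzs_subseq_def by (elim exE conjE) (rule that)
  have "(\<Sum>i\<in>I. w i * take m xs ! i) = (\<Sum>i\<in>I. w i * xs ! i)"
    using I(1) by (intro sum.cong) auto
  then show ?thesis
    unfolding has_wzs_subseq_def using I sum by (intro exI[of _ I] exI[of _ w]) auto
qed

lemma davenportA_eqI:
  assumes "\<forall>xs. Zn_seq n xs \<and> length xs = k + 1 \<longrightarrow> has_wzs_subseq n A xs"
    and "Zn_seq n ys" "length ys = k" "\<not> has_wzs_subseq n A ys"
  shows "davenportA n A = k + 1"
  unfolding davenportA_def
proof (rule Least_equality)
  fix m
  assume m: "\<forall>xs. Zn_seq n xs \<and> length xs = m \<longrightarrow> has_wzs_subseq n A xs"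
  show "k + 1 \<le> m"
  proof (rule ccontr)
    assume "\<not> k + 1 \<le> m"
    then have "Zn_seq n (take m ys)" "length (take m ys) = m"
      using assms(2,3) set_take_subset[of m ys] by (auto simp: Zn_seq_def)
    then show False
      using m assms(4) has_wzs_subseq_take by blast
  qed
qed (use assms(1) in blast)

lemma prime_factor_dvd_cofactor_iff:
  fixes n :: nat
  assumes "squarefree n" "p \<in> prime_factors n" "q \<in> prime_factors n"
  shows "p dvd n div q \<longleftrightarrow> p \<noteq> q"
proof
  assume "p dvd n div q"
  then have "p * q dvd n div q * q"
    by (rule mult_dvd_mono) simp
  moreover have "n div q * q = n"
    using assms(3) by (simp add: in_prime_factors_iff)
  ultimately show "p \<noteq> q"
    using assms squarefreeD[of n p] in_prime_factors_imp_prime[OF assms(2)]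
    by (auto simp: power2_eq_square)
next
  assume "p \<noteq> q"
  have "p dvd q * (n div q)"
    using assms(2,3) by (simp add: in_prime_factors_iff)
  moreover have "\<not> p dvd q"
    using assms(2,3) \<open>p \<noteq> q\<close> primes_dvd_imp_eq by blast
  ultimately show "p dvd n div q"
    using in_prime_factors_imp_prime[OF assms(2)] by (simp add: prime_dvd_mult_iff)
qed

definition cofactor_seq :: "nat \<Rightarrow> nat list" where
  "cofactor_seq n = map (\<lambda>p. n div p) (sorted_list_of_set (prime_factors n))"

lemma length_cofactor_seq: "length (cofactor_seq n) = card (prime_factors n)"
  by (simp add: cofactor_seq_def)

lemma Zn_seq_cofactor_seq:
  assumes "1 < n"
  shows "Zn_seq n (cofactor_seq n)"
  unfolding Zn_seq_def
proof
  fix x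
  assume "x \<in> set (cofactor_seq n)"
  then obtain p where "p \<in> prime_factors n" "x = n div p"
    by (auto simp: cofactor_seq_def)
  then show "x \<in> {..<n}"
    using assms prime_gt_1_nat[OF in_prime_factors_imp_prime] by (auto intro: div_less_dividend)
qed

lemma cofactor_seq_no_unit_zero_sum:
  assumes "squarefree n"
  shows "\<not> has_wzs_subseq n (unitsZ n) (cofactor_seq n)"
proof
  let ?ps = "sorted_list_of_set (prime_factors n)"
  assume "has_wzs_subseq n (unitsZ n) (cofactor_seq n)"
  then obtain T where T: "admissible_support n (cofactor_seq n) T"
    using admissible_support_if_unit_zero_sum by blast
  then have T_sub: "T \<subseteq> {..<length ?ps}"
    by (simp add: admissible_support_def cofactor_seq_def)
  have "T \<noteq> {}"
    using T by (simp add: admissible_support_def)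
  then obtain j where "j \<in> T"
    by (meson ex_in_conv)
  have ps: "?ps ! i \<in> prime_factors n" if "i < length ?ps" for i
    using nth_mem[OF that] by simp
  \<comment> \<open>the prime \<open>?ps ! j\<close> divides every term of the sequence except the \<open>j\<close>-th\<close>
  have "?ps ! j dvd cofactor_seq n ! i \<longleftrightarrow> i \<noteq> j" if "i \<in> T" for i
  proof -
    have "i < length ?ps" "j < length ?ps"
      using T_sub that \<open>j \<in> T\<close> by auto
    then show ?thesis
      using prime_factor_dvd_cofactor_iff[OF assms ps ps] nth_eq_iff_index_eq[of ?ps j i]
      by (auto simp: cofactor_seq_def)
  qed
  then have "{i\<in>T. \<not> ?ps ! j dvd cofactor_seq n ! i} = {j}"
    using \<open>j \<in> T\<close> by blast
  moreover have "card {i\<in>T. \<not> ?ps ! j dvd cofactor_seq n ! i} \<noteq> 1"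
    using T ps T_sub \<open>j \<in> T\<close> by (simp add: admissible_support_def subset_iff)
  ultimately show False
    by simp
qed

lemma Sn_subset_unitsZ: "Sn n \<subseteq> unitsZ n"
  by (auto simp: Sn_def)

context
  fixes n :: nat
  assumes sq: "squarefree n" and "1 < n" and p7: "\<forall>p\<in>prime_factors n. 7 \<le> p"
    and three: "3 \<le> card (prime_factors n)"
begin

lemma Sn_zero_sum_if_long_or_unit_zero_sum:
  assumes zn: "Zn_seq n ys"
    and long: "card (prime_factors n) < length ys \<or>
      length ys = card (prime_factors n) \<and> has_wzs_subseq n (unitsZ n) ys"
  shows "has_wzs_subseq n (Sn n) ys"
proof -
  obtain T where "admissible_support n ys T"
    using long admissible_support_exists admissible_support_if_unit_zero_sum by blast
  moreover have "3 \<le> length ys"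
    using long three by auto
  ultimately show ?thesis
    using Sn_zero_sum_if_admissible_support[OF sq \<open>1 < n\<close> p7 zn] by blast
qed

lemma davenportA_squarefree:
  assumes "A \<in> {Sn n, unitsZ n}"
  shows "davenportA n A = card (prime_factors n) + 1"
proof (rule davenportA_eqI)
  show "\<forall>ys. Zn_seq n ys \<and> length ys = card (prime_factors n) + 1 \<longrightarrow> has_wzs_subseq n A ys"
    using assms Sn_zero_sum_if_long_or_unit_zero_sum has_wzs_subseq_mono[OF Sn_subset_unitsZ] by auto
  show "\<not> has_wzs_subseq n A (cofactor_seq n)"
    using assms cofactor_seq_no_unit_zero_sum[OF sq] has_wzs_subseq_mono[OF Sn_subset_unitsZ] by auto
qed (simp_all add: Zn_seq_cofactor_seq[OF \<open>1 < n\<close>] length_cofactor_seq)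

end

theorem mainTheorem4:
  fixes n :: nat and xs :: "nat list"
  assumes "odd n" and "squarefree n" and "bigOmega n \<ge> 3"
    and "\<forall>p\<in>prime_factors n. p \<ge> 7"
  shows "extremal_seq n (Sn n) xs \<longleftrightarrow> extremal_seq n (unitsZ n) xs"
proof -
  have three: "3 \<le> card (prime_factors n)"
    using assms(2,3) by (simp add: bigOmega_squarefree)
  have "0 < n"
    using assms(1) by (rule odd_pos)
  moreover have "n \<noteq> 1"
    using three by auto
  ultimately have "1 < n"
    by linarith
  note setting = assms(2) this assms(4) three
  have "davenportA n (Sn n) = card (prime_factors n) + 1"
    "davenportA n (unitsZ n) = card (prime_factors n) + 1"
    using davenportA_squarefree[OF setting] by simp_all
  moreover have "has_wzs_subseq n (Sn n) xs \<longleftrightarrow> has_wzs_subseq n (unitsZ n) xs"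
    if "Zn_seq n xs" "length xs = card (prime_factors n)"
    using that Sn_zero_sum_if_long_or_unit_zero_sum[OF setting] has_wzs_subseq_mono[OF Sn_subset_unitsZ]
    by blast
  ultimately show ?thesis
    unfolding extremal_seq_def by auto
qed

end
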